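(* Let $X\subset\mathbb{R}$ with the Euclidean metric, and let $(X,T_1,\mu_1)$ and $(X,T_2,\mu_2)$ be two probability preserving systems which are both exponentially mixing for $BV$ against $L^\infty$. Let $(r_n)_n$ be a sequence of positive numbers and suppose there is a function $h:\mathbb{N}\to(0,\infty)$ with $h(n)\to\infty$ such that for all $n$ sufficiently large \[ \int \mu_1(B(y,r_n))\,d\mu_2(y) \ge \frac{(\log n)^2 h(n)}{n^2} \] and, for $i=1,2$, \[ \frac{\bigl(\int \mu_i(B(y,r_n))\,d\mu_i(y)\bigr)^{1/2}}{\int \mu_1(B(y,r_n))\,d\mu_2(y)} \le \frac{n}{(\log n)\,h(n)}. \] Then $(\mu_1\times\mu_2)\bigl(\limsup_n E_{n,r_n}^{T_1,T_2}\bigr)=1$.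
   Context: A measure preserving system $(X,T,\mu)$ with $X\subset\mathbb{R}$ is exponentially mixing for $BV$ against $L^\infty$ if there are $C,\theta>0$ such that for all $\psi$ of bounded variation and all $\varphi\in L^\infty(\mu)$ and all $n\ge 0$, $\bigl|\int\psi\cdot\varphi\circ T^n\,d\mu-\int\psi\,d\mu\int\varphi\,d\mu\bigr|\le C\|\psi\|_{BV}\|\varphi\|_{L^\infty}e^{-\theta n}$. For $n\in\mathbb{N}$ and $r>0$, $E_{n,r}^{T_1,T_2}:=\{(x,y)\in X\times X : |T_1^i x- T_2^j y|<r \text{ for some } 0\le i,j<n\}$; $E_{n,r_n}^{T_1,T_2}$ denotes this set with $r=r_n$. $B(y,r)$ is the open ball of radius $r$ about $y$. *)

theory Defs
  imports "HOL-Probability.Probability"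
begin

definition var_on :: "real set \<Rightarrow> (real \<Rightarrow> real) \<Rightarrow> ereal" where
  "var_on X \<psi> = (SUP p \<in> {(k, xs). (\<forall>i\<le>k. xs i \<in> X) \<and> (\<forall>i<k. xs i < xs (Suc i))}.
      ereal (\<Sum>i<fst p. \<bar>\<psi> (snd p (Suc i)) - \<psi> (snd p i)\<bar>))"

definition is_BV_on :: "real set \<Rightarrow> (real \<Rightarrow> real) \<Rightarrow> bool" where
  "is_BV_on X \<psi> \<longleftrightarrow> var_on X \<psi> < \<infinity> \<and> bdd_above ((\<lambda>x. \<bar>\<psi> x\<bar>) ` X)"

definition BV_norm :: "real set \<Rightarrow> (real \<Rightarrow> real) \<Rightarrow> real" where
  "BV_norm X \<psi> = real_of_ereal (var_on X \<psi>) + (SUP x \<in> X. \<bar>\<psi> x\<bar>)"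

definition Linf_norm :: "'a measure \<Rightarrow> ('a \<Rightarrow> real) \<Rightarrow> real" where
  "Linf_norm M \<phi> = real_of_ereal (esssup M (\<lambda>x. ereal \<bar>\<phi> x\<bar>))"

definition exp_mixing_BV_Linf :: "real measure \<Rightarrow> (real \<Rightarrow> real) \<Rightarrow> bool" where
  "exp_mixing_BV_Linf M T \<longleftrightarrow>
     (\<exists>C \<theta>::real. C > 0 \<and> \<theta> > 0 \<and>
       (\<forall>\<psi> \<phi> (n::nat). \<psi> \<in> borel_measurable M \<longrightarrow> is_BV_on (space M) \<psi> \<longrightarrow>
          \<phi> \<in> borel_measurable M \<longrightarrow> esssup M (\<lambda>x. ereal \<bar>\<phi> x\<bar>) < \<infinity> \<longrightarrow>
          \<bar>(\<integral>x. \<psi> x * \<phi> ((T ^^ n) x) \<partial>M) - (\<integral>x. \<psi> x \<partial>M) * (\<integral>x. \<phi> x \<partial>M)\<bar>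
            \<le> C * BV_norm (space M) \<psi> * Linf_norm M \<phi> * exp (- \<theta> * real n)))"

definition E_set :: "real set \<Rightarrow> (real \<Rightarrow> real) \<Rightarrow> (real \<Rightarrow> real) \<Rightarrow> nat \<Rightarrow> real \<Rightarrow> (real \<times> real) set" where
  "E_set X T1 T2 n r = {(x, y). x \<in> X \<and> y \<in> X \<and>
      (\<exists>i<n. \<exists>j<n. \<bar>(T1 ^^ i) x - (T2 ^^ j) y\<bar> < r)}"

end

theory Submission
  imports Defs
begin

(*
  Second moment method. Let Z_n(x, y) count the pairs i, j < n with |T1^i x - T2^j y| < r_n, so
  that E_{n,r_n} = {Z_n > 0}, and let m_n = \<integral> \<mu>1(B(y, r_n)) d\<mu>2(y). By invariance, E Z_n = n^2 m_n.
  Expand E Z_n^2 over quadruples (i, j, i', j'). If |i - i'| \<ge> L and |j - j'| \<ge> L, mixing of T1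
  (applied to indicators of balls) and then mixing of T2 (applied to y \<mapsto> \<mu>1(B(y, r_n)), a function
  of variation at most 2) bound the term by m_n^2 + 2 C e^(-\<theta> L). If only one index pair is
  L-separated, the missing factor is controlled by \<mu>(B(a, r)) \<le> 2 (\<integral> \<mu>(B(y, r)) d\<mu>)^(1/2): the ball
  is covered by two sets of diameter less than r, and \<mu>(A)^2 \<le> \<integral> \<mu>(B(y, r)) d\<mu> for such a set A.
  The O(n^2 L^2) remaining quadruples contribute at most m_n each. Taking L \<approx> (4/\<theta>) log n,
  Chebyshev's inequality gives (\<mu>1 \<times> \<mu>2)(Z_n = 0) = O(1/h(n)), so the probabilities of
  E_{n,r_n} tend to 1, and then their limsup has full measure.
*)

lemma measurable_funpow: "T \<in> measurable M M \<Longrightarrow> T ^^ i \<in> measurable M M"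
  by (induction i) auto

lemma distr_funpow_eq:
  assumes "T \<in> measurable M M" and "distr M M T = M"
  shows "distr M M (T ^^ i) = M"
proof (induction i)
  case 0
  then show ?case by (simp add: distr_id2 id_def)
next
  case (Suc i)
  have "distr M M (T ^^ Suc i) = distr (distr M M (T ^^ i)) M T"
    using distr_distr[OF assms(1) measurable_funpow[OF assms(1)], of i] by (simp add: comp_def)
  then show ?case using Suc assms by (simp add: o_def)
qed

lemma integral_funpow_eq:
  fixes g :: "'a \<Rightarrow> real"
  assumes "T \<in> measurable M M" and "distr M M T = M" and "g \<in> borel_measurable M"
  shows "(\<integral>x. g ((T ^^ i) x) \<partial>M) = (\<integral>x. g x \<partial>M)"
  using integral_distr[OF measurable_funpow[OF assms(1)] assms(3), of i] distr_funpow_eq[OF assms(1,2)]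
  by simp

section \<open>Test functions of bounded variation\<close>

lemma var_on_nonneg: "X \<noteq> {} \<Longrightarrow> 0 \<le> var_on X \<psi>"
  unfolding var_on_def
  by (rule SUP_upper2[where i="(0, \<lambda>_. SOME x. x \<in> X)"]) (auto simp: some_in_eq)

lemma var_on_diff_mono_le_2:
  assumes "mono G" and "mono H" and "\<And>u. G u \<in> {0..1}" and "\<And>u. H u \<in> {0..1}"
  shows "var_on X (\<lambda>u. G u - H u) \<le> 2"
  unfolding var_on_def
proof (rule SUP_least, clarsimp)
  fix k and xs :: "nat \<Rightarrow> real"
  assume "\<forall>i<k. xs i < xs (Suc i)"
  then have steps: "G (xs i) \<le> G (xs (Suc i)) \<and> H (xs i) \<le> H (xs (Suc i))" if "i < k" for i
    using that assms(1,2) by (auto simp: mono_def less_imp_le)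
  have "(\<Sum>i<k. \<bar>G (xs (Suc i)) - H (xs (Suc i)) - (G (xs i) - H (xs i))\<bar>)
      \<le> (\<Sum>i<k. (G (xs (Suc i)) - G (xs i)) + (H (xs (Suc i)) - H (xs i)))"
    using steps by (intro sum_mono) fastforce
  also have "\<dots> = (G (xs k) - G (xs 0)) + (H (xs k) - H (xs 0))"
    by (simp add: sum.distrib sum_lessThan_telescope[of "\<lambda>i. G (xs i)"]
        sum_lessThan_telescope[of "\<lambda>i. H (xs i)"])
  also have "\<dots> \<le> 2"
    using assms(3)[of "xs k"] assms(3)[of "xs 0"] assms(4)[of "xs k"] assms(4)[of "xs 0"] by auto
  finally show "(\<Sum>i<k. \<bar>G (xs (Suc i)) - H (xs (Suc i)) - (G (xs i) - H (xs i))\<bar>) \<le> 2" .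
qed

(* Indicators of balls and the functions y \<mapsto> \<mu>(B(y, r)) are such test functions. Their BV norm
   is at most 3 and their L\<^sup>\<infinity> norm at most 1, so mixing holds for them with a uniform constant. *)
definition BV_test :: "real set \<Rightarrow> (real \<Rightarrow> real) \<Rightarrow> bool" where
  "BV_test X \<psi> \<longleftrightarrow> \<psi> \<in> borel_measurable borel \<and> (\<forall>u. \<psi> u \<in> {0..1}) \<and> var_on X \<psi> \<le> 2"

lemma BV_test_BV_norm:
  assumes "X \<noteq> {}" and "BV_test X \<psi>"
  shows "is_BV_on X \<psi>" and "0 \<le> BV_norm X \<psi>" and "BV_norm X \<psi> \<le> 3"
proof -
  have var: "var_on X \<psi> \<le> 2" and range: "\<And>u. \<psi> u \<in> {0..1}"
    using assms(2) unfolding BV_test_def by auto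
  have bdd: "bdd_above ((\<lambda>x. \<bar>\<psi> x\<bar>) ` X)"
    using range by (auto intro!: bdd_aboveI[where M=1])
  show "is_BV_on X \<psi>"
    unfolding is_BV_on_def using var bdd by (auto simp: order_le_less_trans)
  have "0 \<le> real_of_ereal (var_on X \<psi>)" "real_of_ereal (var_on X \<psi>) \<le> 2"
    using var var_on_nonneg[OF assms(1), of \<psi>] by (cases "var_on X \<psi>"; auto)+
  moreover have "(SUP x\<in>X. \<bar>\<psi> x\<bar>) \<le> 1"
    using assms(1) range by (intro cSUP_least) auto
  moreover obtain x0 where "x0 \<in> X" using assms(1) by auto
  then have "0 \<le> (SUP x\<in>X. \<bar>\<psi> x\<bar>)"
    using cSUP_upper[OF _ bdd] by (meson abs_ge_zero order_trans)
  ultimately show "0 \<le> BV_norm X \<psi>" and "BV_norm X \<psi> \<le> 3"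
    unfolding BV_norm_def by auto
qed

lemma BV_test_indicator_ball:
  assumes "0 < r"
  shows "BV_test X (indicator (ball a r))"
proof -
  have "indicator (ball a r) = (\<lambda>u. of_bool (a - r < u) - of_bool (a + r \<le> u) :: real)"
    using assms by (auto simp: fun_eq_iff indicator_def ball_def dist_real_def)
  moreover have "var_on X (\<lambda>u. of_bool (a - r < u) - of_bool (a + r \<le> u)) \<le> 2"
    by (rule var_on_diff_mono_le_2) (auto simp: mono_def)
  ultimately show ?thesis
    unfolding BV_test_def using assms by (auto simp: indicator_def)
qed

lemma (in prob_space) Linf_norm_le_1:
  assumes "\<phi> \<in> borel_measurable M" and "\<And>u. \<bar>\<phi> u\<bar> \<le> 1"
  shows "esssup M (\<lambda>x. ereal \<bar>\<phi> x\<bar>) \<le> 1" and "Linf_norm M \<phi> \<le> 1"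
proof -
  show ess: "esssup M (\<lambda>x. ereal \<bar>\<phi> x\<bar>) \<le> 1"
    using assms by (intro esssup_I) auto
  then show "Linf_norm M \<phi> \<le> 1"
    unfolding Linf_norm_def by (cases "esssup M (\<lambda>x. ereal \<bar>\<phi> x\<bar>)") auto
qed

definition decay_BV_test :: "real measure \<Rightarrow> (real \<Rightarrow> real) \<Rightarrow> real set \<Rightarrow> real \<Rightarrow> real \<Rightarrow> bool" where
  "decay_BV_test M T X C \<theta> \<longleftrightarrow> (\<forall>\<psi> \<phi> k. BV_test X \<psi> \<longrightarrow> BV_test X \<phi> \<longrightarrow>
     \<bar>(\<integral>x. \<psi> x * \<phi> ((T ^^ k) x) \<partial>M) - (\<integral>x. \<psi> x \<partial>M) * (\<integral>x. \<phi> x \<partial>M)\<bar> \<le> C * exp (- \<theta> * real k))"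

lemma decay_BV_test_nonneg:
  assumes "decay_BV_test M T X C \<theta>"
  shows "0 \<le> C"
proof -
  have "BV_test X (\<lambda>_. 0)"
    unfolding BV_test_def var_on_def by (auto intro: SUP_least)
  then have "\<bar>(\<integral>x. 0 * 0 \<partial>M) - (\<integral>x. 0 \<partial>M) * (\<integral>x. 0 \<partial>M)\<bar> \<le> C * exp (- \<theta> * real 0)"
    using assms unfolding decay_BV_test_def by blast
  then show ?thesis
    by simp
qed

lemma decay_BV_test_mono:
  assumes "decay_BV_test M T X C \<theta>" and "C \<le> C'" and "\<theta>' \<le> \<theta>"
  shows "decay_BV_test M T X C' \<theta>'"
  unfolding decay_BV_test_def
proof (intro allI impI)
  fix \<psi> \<phi> k
  assume "BV_test X \<psi>" and "BV_test X \<phi>"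
  then have "\<bar>(\<integral>x. \<psi> x * \<phi> ((T ^^ k) x) \<partial>M) - (\<integral>x. \<psi> x \<partial>M) * (\<integral>x. \<phi> x \<partial>M)\<bar> \<le> C * exp (- \<theta> * real k)"
    using assms(1) unfolding decay_BV_test_def by blast
  also have "\<dots> \<le> C' * exp (- \<theta>' * real k)"
    using decay_BV_test_nonneg[OF assms(1)] assms(2,3)
    by (intro mult_mono) (auto intro: mult_right_mono)
  finally show "\<bar>(\<integral>x. \<psi> x * \<phi> ((T ^^ k) x) \<partial>M) - (\<integral>x. \<psi> x \<partial>M) * (\<integral>x. \<phi> x \<partial>M)\<bar>
      \<le> C' * exp (- \<theta>' * real k)" .
qed

locale real_mps = prob_space M for M :: "real measure" +
  fixes T :: "real \<Rightarrow> real" and X :: "real set"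
  assumes space_eq: "space M = X" and sets_eq: "sets M = sets (restrict_space borel X)"
    and T_measurable: "T \<in> measurable M M" and T_preserving: "distr M M T = M"
begin

abbreviation ball_prob :: "real \<Rightarrow> real \<Rightarrow> real" where
  "ball_prob r a \<equiv> measure M (ball a r \<inter> X)"

lemma X_nonempty: "X \<noteq> {}"
  using not_empty space_eq by simp

lemma borel_measurable_from_borel: "\<psi> \<in> borel_measurable borel \<Longrightarrow> \<psi> \<in> borel_measurable M"
  using measurable_restrict_space1 measurable_cong_sets[OF sets_eq refl] by blast

lemma borel_measurable_ident [measurable]: "(\<lambda>x. x) \<in> borel_measurable M"
  by (rule borel_measurable_from_borel) simp

lemma measurable_funpow_T [measurable]: "T ^^ i \<in> measurable M M"
  by (rule measurable_funpow[OF T_measurable])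

lemma borel_measurable_funpow [measurable]: "(\<lambda>x. (T ^^ i) x) \<in> borel_measurable M"
  by measurable

lemma integral_funpow:
  fixes g :: "real \<Rightarrow> real"
  shows "g \<in> borel_measurable M \<Longrightarrow> (\<integral>x. g ((T ^^ i) x) \<partial>M) = (\<integral>x. g x \<partial>M)"
  by (rule integral_funpow_eq[OF T_measurable T_preserving])

lemma exp_mixing_imp_decay:
  assumes "exp_mixing_BV_Linf M T"
  obtains C \<theta> where "0 < C" and "0 < \<theta>" and "decay_BV_test M T X C \<theta>"
proof -
  obtain C \<theta> where pos: "0 < C" "0 < \<theta>" and mix:
    "\<And>\<psi> \<phi> n. \<psi> \<in> borel_measurable M \<Longrightarrow> is_BV_on X \<psi> \<Longrightarrow>
       \<phi> \<in> borel_measurable M \<Longrightarrow> esssup M (\<lambda>x. ereal \<bar>\<phi> x\<bar>) < \<infinity> \<Longrightarrow>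
       \<bar>(\<integral>x. \<psi> x * \<phi> ((T ^^ n) x) \<partial>M) - (\<integral>x. \<psi> x \<partial>M) * (\<integral>x. \<phi> x \<partial>M)\<bar>
         \<le> C * BV_norm X \<psi> * Linf_norm M \<phi> * exp (- \<theta> * real n)"
    using assms unfolding exp_mixing_BV_Linf_def space_eq by blast
  have "decay_BV_test M T X (3 * C) \<theta>"
    unfolding decay_BV_test_def
  proof (intro allI impI)
    fix \<psi> \<phi> k
    assume \<psi>: "BV_test X \<psi>" and \<phi>: "BV_test X \<phi>"
    have meas: "\<psi> \<in> borel_measurable M" "\<phi> \<in> borel_measurable M"
      using \<psi> \<phi> borel_measurable_from_borel unfolding BV_test_def by auto
    have "\<bar>\<phi> u\<bar> \<le> 1" for u
      using \<phi> unfolding BV_test_def by (simp add: abs_le_iff)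
    note Linf = Linf_norm_le_1[OF meas(2) this]
    have ess: "esssup M (\<lambda>x. ereal \<bar>\<phi> x\<bar>) < \<infinity>"
      using Linf(1) by (auto simp: le_less_trans)
    note BV = BV_test_BV_norm[OF X_nonempty \<psi>]
    have "BV_norm X \<psi> * Linf_norm M \<phi> \<le> 3"
      using mult_left_mono[OF Linf(2) BV(2)] BV(3) by simp
    then have "C * BV_norm X \<psi> * Linf_norm M \<phi> * exp (- \<theta> * real k) \<le> 3 * C * exp (- \<theta> * real k)"
      using pos by (simp add: mult.assoc mult.left_commute)
    then show "\<bar>(\<integral>x. \<psi> x * \<phi> ((T ^^ k) x) \<partial>M) - (\<integral>x. \<psi> x \<partial>M) * (\<integral>x. \<phi> x \<partial>M)\<bar>
        \<le> 3 * C * exp (- \<theta> * real k)"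
      using mix[OF meas(1) BV(1) meas(2) ess, of k] by linarith
  qed
  with pos show thesis
    by (intro that[of "3 * C" \<theta>]) auto
qed

lemma decay_BV_test_separated:
  assumes decay: "decay_BV_test M T X C \<theta>" and "0 \<le> \<theta>"
    and "BV_test X \<psi>" and "BV_test X \<phi>" and "i + L \<le> i' \<or> i' + L \<le> i"
  shows "\<bar>(\<integral>x. \<psi> ((T ^^ i) x) * \<phi> ((T ^^ i') x) \<partial>M) - (\<integral>x. \<psi> x \<partial>M) * (\<integral>x. \<phi> x \<partial>M)\<bar>
    \<le> C * exp (- \<theta> * real L)"
proof -
  have ordered: "\<bar>(\<integral>x. f ((T ^^ a) x) * g ((T ^^ b) x) \<partial>M) - (\<integral>x. f x \<partial>M) * (\<integral>x. g x \<partial>M)\<bar>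
      \<le> C * exp (- \<theta> * real L)"
    if f: "BV_test X f" and g: "BV_test X g" and "a + L \<le> b" for f g a b
  proof -
    have [measurable]: "f \<in> borel_measurable M" "g \<in> borel_measurable M"
      using f g borel_measurable_from_borel unfolding BV_test_def by auto
    have "T ^^ b = T ^^ (b - a) \<circ> T ^^ a"
      using \<open>a + L \<le> b\<close> by (simp flip: funpow_add)
    then have "(\<integral>x. f ((T ^^ a) x) * g ((T ^^ b) x) \<partial>M)
        = (\<integral>x. (\<lambda>u. f u * g ((T ^^ (b - a)) u)) ((T ^^ a) x) \<partial>M)"
      by simp
    also have "\<dots> = (\<integral>x. f x * g ((T ^^ (b - a)) x) \<partial>M)"
      by (rule integral_funpow) measurable
    finally have "\<bar>(\<integral>x. f ((T ^^ a) x) * g ((T ^^ b) x) \<partial>M) - (\<integral>x. f x \<partial>M) * (\<integral>x. g x \<partial>M)\<bar>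
        \<le> C * exp (- \<theta> * real (b - a))"
      using decay f g unfolding decay_BV_test_def by simp
    also have "\<dots> \<le> C * exp (- \<theta> * real L)"
      using decay_BV_test_nonneg[OF decay] \<open>0 \<le> \<theta>\<close> \<open>a + L \<le> b\<close>
      by (intro mult_left_mono) (auto intro: mult_left_mono)
    finally show ?thesis .
  qed
  from \<open>i + L \<le> i' \<or> i' + L \<le> i\<close> show ?thesis
  proof
    assume "i + L \<le> i'"
    then show ?thesis by (rule ordered[OF assms(3,4)])
  next
    assume "i' + L \<le> i"
    from ordered[OF assms(4,3) this] show ?thesis
      by (simp add: mult.commute)
  qed
qed

lemma ball_inter_X_sets: "ball a r \<inter> X \<in> sets M"
proof -
  have "{x \<in> space M. dist a x < r} \<in> sets M" by measurable
  then show ?thesis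
    using space_eq by (simp add: ball_def Collect_conj_eq Int_commute)
qed

lemma BV_test_ball_prob:
  assumes "0 < r"
  shows "BV_test X (ball_prob r)"
proof -
  define G where "G a = 1 - prob {x \<in> space M. a + r \<le> x}" for a
  define H where "H a = 1 - prob {x \<in> space M. a - r < x}" for a
  have "mono G" and "mono H"
    unfolding mono_def G_def H_def by (auto intro!: finite_measure_mono)
  have "ball a r \<inter> X = {x \<in> space M. a - r < x} - {x \<in> space M. a + r \<le> x}" for a
    using space_eq by (auto simp: ball_def dist_real_def)
  moreover have "{x \<in> space M. a + r \<le> x} \<subseteq> {x \<in> space M. a - r < x}" for a
    using assms by auto
  ultimately have eq: "ball_prob r = (\<lambda>a. G a - H a)"
    unfolding G_def H_def by (simp add: fun_eq_iff finite_measure_Diff)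
  have "(\<lambda>a. G a - H a) \<in> borel_measurable borel"
    using borel_measurable_mono[OF \<open>mono G\<close>] borel_measurable_mono[OF \<open>mono H\<close>] by measurable
  moreover have "var_on X (\<lambda>a. G a - H a) \<le> 2"
    by (rule var_on_diff_mono_le_2[OF \<open>mono G\<close> \<open>mono H\<close>]) (auto simp: G_def H_def)
  moreover have "G a - H a \<in> {0..1}" for a
    using fun_cong[OF eq, of a, symmetric] by simp
  ultimately show ?thesis
    unfolding BV_test_def eq by simp
qed

lemma borel_measurable_ball_prob [measurable]: "0 < r \<Longrightarrow> ball_prob r \<in> borel_measurable borel"
  using BV_test_ball_prob unfolding BV_test_def by blast

(* A set of diameter less than r lies in the ball of radius r around each of its points. *)
lemma measure_square_le_integral_ball_prob:
  assumes "A \<in> sets M" and diam: "\<And>u v. u \<in> A \<Longrightarrow> v \<in> A \<Longrightarrow> \<bar>u - v\<bar> < r" and "0 < r"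
  shows "(prob A)\<^sup>2 \<le> (\<integral>y. ball_prob r y \<partial>M)"
proof -
  have [measurable]: "A \<in> sets M" "ball_prob r \<in> borel_measurable M"
    using assms borel_measurable_from_borel by auto
  have A_sub: "A \<subseteq> X"
    using sets.sets_into_space[OF \<open>A \<in> sets M\<close>] space_eq by simp
  have "(prob A)\<^sup>2 = (\<integral>y. indicator A y * prob A \<partial>M)"
    using A_sub space_eq by (simp add: power2_eq_square Int_absorb2)
  also have "\<dots> \<le> (\<integral>y. indicator A y * ball_prob r y \<partial>M)"
  proof (rule integral_mono)
    fix y
    have "prob A \<le> ball_prob r y" if "y \<in> A"
      using that diam A_sub ball_inter_X_sets
      by (intro finite_measure_mono) (auto simp: ball_def dist_real_def)
    then show "indicator A y * prob A \<le> indicator A y * ball_prob r y"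
      by (simp add: indicator_def)
  qed (auto intro!: integrable_const_bound[where B=1] simp: indicator_def)
  also have "\<dots> \<le> (\<integral>y. ball_prob r y \<partial>M)"
    by (rule integral_mono) (auto intro!: integrable_const_bound[where B=1] simp: indicator_def)
  finally show ?thesis .
qed

lemma ball_prob_le_sqrt:
  assumes "0 < r"
  shows "ball_prob r a \<le> 2 * sqrt (\<integral>y. ball_prob r y \<partial>M)"
proof -
  define A1 where "A1 = {x \<in> space M. a - r \<le> x \<and> x < a}"
  define A2 where "A2 = {x \<in> space M. a \<le> x \<and> x < a + r}"
  have [measurable]: "A1 \<in> sets M" "A2 \<in> sets M"
    unfolding A1_def A2_def by measurable
  have "(prob A1)\<^sup>2 \<le> (\<integral>y. ball_prob r y \<partial>M)" "(prob A2)\<^sup>2 \<le> (\<integral>y. ball_prob r y \<partial>M)"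
    using assms by (auto intro!: measure_square_le_integral_ball_prob simp: A1_def A2_def)
  then have "prob A1 \<le> sqrt (\<integral>y. ball_prob r y \<partial>M)" "prob A2 \<le> sqrt (\<integral>y. ball_prob r y \<partial>M)"
    by (auto simp: real_le_rsqrt)
  moreover have "ball_prob r a \<le> prob (A1 \<union> A2)"
    using space_eq by (intro finite_measure_mono) (auto simp: A1_def A2_def ball_def dist_real_def)
  moreover have "prob (A1 \<union> A2) \<le> prob A1 + prob A2"
    by (rule measure_subadditive) auto
  ultimately show ?thesis
    by linarith
qed

lemma integral_indicator_ball: "(\<integral>x. indicator (ball a r) x \<partial>M) = ball_prob r a"
  using space_eq by simp

lemma integral_indicator_ball_funpow:
  "(\<integral>x. indicator (ball a r) ((T ^^ i) x) \<partial>M) = ball_prob r a"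
proof -
  have "(indicator (ball a r) :: real \<Rightarrow> real) \<in> borel_measurable M"
    by (intro borel_measurable_from_borel borel_measurable_indicator) auto
  from integral_funpow[OF this] show ?thesis
    using integral_indicator_ball by simp
qed

end

section \<open>Close visits of two orbits\<close>

definition hit :: "(real \<Rightarrow> real) \<Rightarrow> (real \<Rightarrow> real) \<Rightarrow> real \<Rightarrow> nat \<Rightarrow> nat \<Rightarrow> real \<times> real \<Rightarrow> real" where
  "hit T S r i j z = indicator (ball ((S ^^ j) (snd z)) r) ((T ^^ i) (fst z))"

definition hits :: "(real \<Rightarrow> real) \<Rightarrow> (real \<Rightarrow> real) \<Rightarrow> real \<Rightarrow> nat \<Rightarrow> real \<times> real \<Rightarrow> real" where
  "hits T S r n z = (\<Sum>i<n. \<Sum>j<n. hit T S r i j z)"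

lemma hit_swap: "hit S T r j i (y, x) = hit T S r i j (x, y)"
  by (simp add: hit_def indicator_def ball_def dist_commute)

lemma hit_nonneg: "0 \<le> hit T S r i j z"
  and hit_le_1: "hit T S r i j z \<le> 1"
  and hit_mult_self: "hit T S r i j z * hit T S r i j z = hit T S r i j z"
  by (auto simp: hit_def indicator_def)

lemma hit_pos_iff: "0 < hit T S r i j (x, y) \<longleftrightarrow> \<bar>(T ^^ i) x - (S ^^ j) y\<bar> < r"
  by (simp add: hit_def indicator_def ball_def dist_real_def abs_minus_commute)

lemma hits_nonneg: "0 \<le> hits T S r n z"
  unfolding hits_def by (simp add: sum_nonneg hit_nonneg)

lemma hits_pos_iff: "0 < hits T S r n (x, y) \<longleftrightarrow> (\<exists>i<n. \<exists>j<n. \<bar>(T ^^ i) x - (S ^^ j) y\<bar> < r)"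
proof -
  have "hit T S r i j (x, y) = 0 \<longleftrightarrow> \<not> \<bar>(T ^^ i) x - (S ^^ j) y\<bar> < r" for i j
    using hit_pos_iff[of T S r i j x y] hit_nonneg[of T S r i j "(x, y)"] by linarith
  moreover have "0 < hits T S r n (x, y) \<longleftrightarrow> hits T S r n (x, y) \<noteq> 0"
    using hits_nonneg[of T S r n "(x, y)"] by linarith
  ultimately show ?thesis
    unfolding hits_def by (auto simp add: sum_nonneg hit_nonneg sum_nonneg_eq_0_iff)
qed

definition near :: "nat \<Rightarrow> nat \<Rightarrow> nat \<Rightarrow> real" where
  "near L a b = of_bool (b < a + L \<and> a < b + L)"

lemma sum_near_le: "(\<Sum>a<n. \<Sum>b<n. near L a b) \<le> real n * (2 * real L)"
proof -
  have "(\<Sum>b<n. near L a b) \<le> 2 * real L" for a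
  proof -
    have "(\<Sum>b<n. near L a b) = real (card ({..<n} \<inter> {b. b < a + L \<and> a < b + L}))"
      by (simp add: near_def of_bool_def sum.If_cases)
    also have "card ({..<n} \<inter> {b. b < a + L \<and> a < b + L}) \<le> card {a - L..<a + L}"
      by (rule card_mono) auto
    finally show ?thesis
      by simp
  qed
  then have "(\<Sum>a<n. \<Sum>b<n. near L a b) \<le> (\<Sum>a<n. 2 * real L)"
    by (intro sum_mono)
  then show ?thesis
    by simp
qed

section \<open>The second moment method\<close>

lemma error_terms_le:
  fixes n l H m c1 c2 L C e \<kappa> :: real
  assumes "1 \<le> l" and "1 \<le> H" and "0 < n"
    and m: "l\<^sup>2 * H / n\<^sup>2 \<le> m"
    and c1: "sqrt c1 / m \<le> n / (l * H)" and c2: "sqrt c2 / m \<le> n / (l * H)"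
    and L: "0 \<le> L" "L \<le> \<kappa> * l" and e: "0 \<le> e" "e \<le> C / n ^ 4" and "0 \<le> c1" "0 \<le> c2"
  shows "2 * e / m\<^sup>2 + 4 * L * (sqrt c1 + sqrt c2) / (n * m) + 4 * L\<^sup>2 / (n\<^sup>2 * m)
      \<le> (2 * C + 8 * \<kappa> + 4 * \<kappa>\<^sup>2) / H"
proof -
  have "1 * H \<le> l\<^sup>2 * H"
    using assms(1,2) by (intro mult_right_mono one_le_power) auto
  then have "H / n\<^sup>2 \<le> l\<^sup>2 * H / n\<^sup>2"
    by (simp add: divide_right_mono)
  then have m_ge: "H / n\<^sup>2 \<le> m"
    using m by linarith
  moreover have "0 < H / n\<^sup>2"
    using assms(2,3) by simp
  ultimately have "0 < m"
    by linarith
  have "0 \<le> C / n ^ 4"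
    using e by linarith
  then have "0 \<le> C"
    using \<open>0 < n\<close> by (simp add: zero_le_divide_iff)
  have "2 * e / m\<^sup>2 \<le> 2 * C / H"
  proof -
    have "(H / n\<^sup>2)\<^sup>2 \<le> m\<^sup>2"
      using m_ge assms(2,3) by (intro power_mono) auto
    then have "H\<^sup>2 / n ^ 4 \<le> m\<^sup>2"
      by (simp add: power_divide power_mult[symmetric])
    then have "2 * e / m\<^sup>2 \<le> 2 * (C / n ^ 4) / (H\<^sup>2 / n ^ 4)"
      using e \<open>0 < m\<close> assms(2,3) by (intro frac_le) auto
    also have "\<dots> = 2 * C / H\<^sup>2"
      using assms(3) by (simp add: field_simps)
    also have "\<dots> \<le> 2 * C / H"
      using \<open>0 \<le> C\<close> assms(2) by (intro divide_left_mono) (auto simp: power2_eq_square)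
    finally show ?thesis .
  qed
  moreover have "4 * L * (sqrt c1 + sqrt c2) / (n * m) \<le> 8 * \<kappa> / H"
  proof -
    have "4 * L * (sqrt c1 + sqrt c2) / (n * m) = (4 * L / n) * (sqrt c1 / m + sqrt c2 / m)"
      using assms(3) \<open>0 < m\<close> by (simp add: field_simps)
    also have "\<dots> \<le> (4 * (\<kappa> * l) / n) * (n / (l * H) + n / (l * H))"
      using L c1 c2 assms(3) \<open>0 \<le> c1\<close> \<open>0 \<le> c2\<close> \<open>0 < m\<close>
      by (intro mult_mono add_mono divide_right_mono) auto
    also have "\<dots> = 8 * \<kappa> / H"
      using assms(1-3) by (simp add: field_simps)
    finally show ?thesis .
  qed
  moreover have "4 * L\<^sup>2 / (n\<^sup>2 * m) \<le> 4 * \<kappa>\<^sup>2 / H"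
  proof -
    have "L\<^sup>2 \<le> (\<kappa> * l)\<^sup>2"
      using L by (intro power_mono) auto
    then have "4 * L\<^sup>2 / (n\<^sup>2 * m) \<le> 4 * (\<kappa> * l)\<^sup>2 / (n\<^sup>2 * (l\<^sup>2 * H / n\<^sup>2))"
      using m assms(1-3) by (intro frac_le mult_left_mono) auto
    also have "\<dots> = 4 * \<kappa>\<^sup>2 / H"
      using assms(1-3) by (simp add: field_simps power2_eq_square)
    finally show ?thesis .
  qed
  ultimately show ?thesis
    by (simp add: add_divide_distrib)
qed

locale real_mps_pair = S1: real_mps M T X + S2: real_mps N S X
  for M :: "real measure" and T and N :: "real measure" and S and X +
  fixes C \<theta> r :: real
  assumes decay1: "decay_BV_test M T X C \<theta>" and decay2: "decay_BV_test N S X C \<theta>"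
    and theta_pos: "0 < \<theta>" and r_pos: "0 < r"
begin

sublocale P: pair_prob_space M N
  by (simp add: pair_prob_space_def pair_sigma_finite_def prob_space_imp_sigma_finite
      S1.prob_space_axioms S2.prob_space_axioms)

lemma real_mps_pair_swap: "real_mps_pair N S M T X C \<theta> r"
  by (intro real_mps_pair.intro real_mps_pair_axioms.intro S1.real_mps_axioms S2.real_mps_axioms
      decay1 decay2 theta_pos r_pos)

abbreviation m12 :: real where
  "m12 \<equiv> \<integral>y. S1.ball_prob r y \<partial>N"

abbreviation hit_corr :: "nat \<Rightarrow> nat \<Rightarrow> nat \<Rightarrow> nat \<Rightarrow> real" where
  "hit_corr i j i' j' \<equiv> \<integral>z. hit T S r i j z * hit T S r i' j' z \<partial>(M \<Otimes>\<^sub>M N)"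

lemma C_nonneg: "0 \<le> C"
  by (rule decay_BV_test_nonneg[OF decay1])

lemma borel_measurable_S1_ball_prob [measurable]: "S1.ball_prob r \<in> borel_measurable N"
  using S2.borel_measurable_from_borel S1.borel_measurable_ball_prob r_pos by blast

lemma borel_measurable_hit [measurable]: "hit T S r i j \<in> borel_measurable (M \<Otimes>\<^sub>M N)"
proof -
  have "(\<lambda>z. of_bool (dist ((S ^^ j) (snd z)) ((T ^^ i) (fst z)) < r) :: real)
      \<in> borel_measurable (M \<Otimes>\<^sub>M N)"
    by measurable
  moreover have "hit T S r i j = (\<lambda>z. of_bool (dist ((S ^^ j) (snd z)) ((T ^^ i) (fst z)) < r))"
    by (auto simp: fun_eq_iff hit_def indicator_def ball_def)
  ultimately show ?thesis
    by simp
qed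

lemma integrable_hit: "integrable (M \<Otimes>\<^sub>M N) (hit T S r i j)"
  by (rule P.integrable_const_bound[where B=1]) (auto simp: hit_def indicator_def)

lemma integrable_hit_mult: "integrable (M \<Otimes>\<^sub>M N) (\<lambda>z. hit T S r i j z * hit T S r i' j' z)"
  by (rule P.integrable_const_bound[where B=1]) (auto simp: hit_def indicator_def)

lemma integral_pair_iterated:
  fixes f :: "real \<times> real \<Rightarrow> real"
  assumes "integrable (M \<Otimes>\<^sub>M N) f"
  shows "(\<integral>z. f z \<partial>(M \<Otimes>\<^sub>M N)) = (\<integral>y. (\<integral>x. f (x, y) \<partial>M) \<partial>N)"
  using P.integral_snd[of "\<lambda>x y. f (x, y)"] assms by simp

lemma integrable_pair_iterated:
  fixes f :: "real \<times> real \<Rightarrow> real"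
  assumes "integrable (M \<Otimes>\<^sub>M N) f"
  shows "integrable N (\<lambda>y. \<integral>x. f (x, y) \<partial>M)"
  using P.integrable_snd[of "\<lambda>x y. f (x, y)"] assms by simp

lemma integral_hit: "(\<integral>z. hit T S r i j z \<partial>(M \<Otimes>\<^sub>M N)) = m12"
proof -
  have "(\<integral>z. hit T S r i j z \<partial>(M \<Otimes>\<^sub>M N)) = (\<integral>y. (\<integral>x. hit T S r i j (x, y) \<partial>M) \<partial>N)"
    by (rule integral_pair_iterated[OF integrable_hit])
  also have "\<dots> = (\<integral>y. S1.ball_prob r ((S ^^ j) y) \<partial>N)"
    by (simp add: hit_def S1.integral_indicator_ball_funpow)
  also have "\<dots> = m12"
    by (rule S2.integral_funpow) measurable
  finally show ?thesis .
qed

lemma hit_corr_le_m12: "hit_corr i j i' j' \<le> m12"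
proof -
  have "hit_corr i j i' j' \<le> (\<integral>z. hit T S r i j z \<partial>(M \<Otimes>\<^sub>M N))"
    using hit_nonneg hit_le_1
    by (intro integral_mono integrable_hit integrable_hit_mult) (simp add: mult_left_le)
  then show ?thesis
    by (simp add: integral_hit)
qed

lemma integrable_ball_prob_funpow_mult:
  "integrable N (\<lambda>y. S1.ball_prob r ((S ^^ j) y) * S1.ball_prob r ((S ^^ j') y))"
  by (rule S2.integrable_const_bound[where B=1]) (auto simp: abs_mult intro!: mult_le_one)

lemma hit_corr_le_integral_ball_prob:
  assumes "i + L \<le> i' \<or> i' + L \<le> i"
  shows "hit_corr i j i' j'
    \<le> (\<integral>y. S1.ball_prob r ((S ^^ j) y) * S1.ball_prob r ((S ^^ j') y) \<partial>N) + C * exp (- \<theta> * real L)"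
proof -
  have inner: "(\<integral>x. hit T S r i j (x, y) * hit T S r i' j' (x, y) \<partial>M)
      \<le> S1.ball_prob r ((S ^^ j) y) * S1.ball_prob r ((S ^^ j') y) + C * exp (- \<theta> * real L)" for y
    using S1.decay_BV_test_separated[OF decay1 _ BV_test_indicator_ball[where a="(S ^^ j) y", OF r_pos]
        BV_test_indicator_ball[where a="(S ^^ j') y", OF r_pos] assms] theta_pos
    by (simp add: hit_def S1.integral_indicator_ball S1.space_eq abs_le_iff)
  have "hit_corr i j i' j' = (\<integral>y. (\<integral>x. hit T S r i j (x, y) * hit T S r i' j' (x, y) \<partial>M) \<partial>N)"
    by (rule integral_pair_iterated[OF integrable_hit_mult])
  also have "\<dots> \<le> (\<integral>y. S1.ball_prob r ((S ^^ j) y) * S1.ball_prob r ((S ^^ j') y)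
      + C * exp (- \<theta> * real L) \<partial>N)"
    by (intro integral_mono inner Bochner_Integration.integrable_add integrable_ball_prob_funpow_mult
        integrable_pair_iterated[OF integrable_hit_mult]) auto
  finally show ?thesis
    using integrable_ball_prob_funpow_mult by (simp add: S2.prob_space)
qed

lemma m12_nonneg: "0 \<le> m12"
  by (rule integral_nonneg_AE) simp

lemma hit_corr_le_separated_first:
  assumes "i + L \<le> i' \<or> i' + L \<le> i"
  shows "hit_corr i j i' j' \<le> 2 * sqrt (\<integral>y. S1.ball_prob r y \<partial>M) * m12 + C * exp (- \<theta> * real L)"
proof -
  let ?s = "2 * sqrt (\<integral>y. S1.ball_prob r y \<partial>M)"
  have "(\<integral>y. S1.ball_prob r ((S ^^ j) y) * S1.ball_prob r ((S ^^ j') y) \<partial>N)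
      \<le> (\<integral>y. S1.ball_prob r ((S ^^ j) y) * ?s \<partial>N)"
    using S1.ball_prob_le_sqrt[OF r_pos]
    by (intro integral_mono integrable_ball_prob_funpow_mult integrable_mult_left
        S2.integrable_const_bound[where B=1]) (auto intro: mult_left_mono)
  also have "\<dots> = m12 * ?s"
    by (simp add: S2.integral_funpow[OF borel_measurable_S1_ball_prob])
  finally show ?thesis
    using hit_corr_le_integral_ball_prob[OF assms, of j j'] by (simp add: mult.commute)
qed

lemma hit_corr_le_separated_both:
  assumes "i + L \<le> i' \<or> i' + L \<le> i" and "j + L \<le> j' \<or> j' + L \<le> j"
  shows "hit_corr i j i' j' \<le> m12\<^sup>2 + 2 * (C * exp (- \<theta> * real L))"
  using S2.decay_BV_test_separated[OF decay2 _ S1.BV_test_ball_prob[OF r_pos] S1.BV_test_ball_prob[OF r_pos]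
      assms(2)] hit_corr_le_integral_ball_prob[OF assms(1), of j j'] theta_pos
  by (simp add: power2_eq_square abs_le_iff)

lemma hit_corr_swap:
  "hit_corr i j i' j' = (\<integral>z. hit S T r j i z * hit S T r j' i' z \<partial>(N \<Otimes>\<^sub>M M))"
proof -
  interpret swapped: real_mps_pair N S M T X C \<theta> r
    by (rule real_mps_pair_swap)
  have "(\<integral>(x, y). hit S T r j i (y, x) * hit S T r j' i' (y, x) \<partial>(M \<Otimes>\<^sub>M N))
      = (\<integral>z. hit S T r j i z * hit S T r j' i' z \<partial>(N \<Otimes>\<^sub>M M))"
    by (rule swapped.P.integral_product_swap) measurable
  then show ?thesis
    by (simp add: hit_swap[of S T r j i] hit_swap[of S T r j' i'] case_prod_beta')
qed

lemma m12_swap: "m12 = (\<integral>x. S2.ball_prob r x \<partial>M)"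
proof -
  interpret swapped: real_mps_pair N S M T X C \<theta> r
    by (rule real_mps_pair_swap)
  have "m12 = hit_corr 0 0 0 0"
    by (simp add: hit_mult_self integral_hit)
  also have "\<dots> = (\<integral>z. hit S T r 0 0 z * hit S T r 0 0 z \<partial>(N \<Otimes>\<^sub>M M))"
    by (rule hit_corr_swap)
  also have "\<dots> = (\<integral>x. S2.ball_prob r x \<partial>M)"
    by (simp add: hit_mult_self swapped.integral_hit)
  finally show ?thesis .
qed

lemma hit_corr_le_separated_second:
  assumes "j + L \<le> j' \<or> j' + L \<le> j"
  shows "hit_corr i j i' j' \<le> 2 * sqrt (\<integral>y. S2.ball_prob r y \<partial>N) * m12 + C * exp (- \<theta> * real L)"
proof -
  interpret swapped: real_mps_pair N S M T X C \<theta> r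
    by (rule real_mps_pair_swap)
  show ?thesis
    using swapped.hit_corr_le_separated_first[OF assms, of i i'] by (simp add: hit_corr_swap m12_swap)
qed

lemma hit_corr_le:
  "hit_corr i j i' j' \<le> m12\<^sup>2 + 2 * (C * exp (- \<theta> * real L))
     + near L i i' * (2 * sqrt (\<integral>y. S2.ball_prob r y \<partial>N) * m12)
     + near L j j' * (2 * sqrt (\<integral>y. S1.ball_prob r y \<partial>M) * m12)
     + near L i i' * near L j j' * m12"
proof -
  have nonneg: "0 \<le> m12" "0 \<le> C * exp (- \<theta> * real L)" "0 \<le> m12\<^sup>2"
    "0 \<le> 2 * sqrt (\<integral>y. S2.ball_prob r y \<partial>N) * m12" "0 \<le> 2 * sqrt (\<integral>y. S1.ball_prob r y \<partial>M) * m12"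
    using m12_nonneg C_nonneg by auto
  consider "i + L \<le> i' \<or> i' + L \<le> i" "j + L \<le> j' \<or> j' + L \<le> j"
    | "i + L \<le> i' \<or> i' + L \<le> i" "\<not> (j + L \<le> j' \<or> j' + L \<le> j)"
    | "\<not> (i + L \<le> i' \<or> i' + L \<le> i)" "j + L \<le> j' \<or> j' + L \<le> j"
    | "\<not> (i + L \<le> i' \<or> i' + L \<le> i)" "\<not> (j + L \<le> j' \<or> j' + L \<le> j)"
    by blast
  then show ?thesis
  proof cases
    case 1
    then have "near L i i' = 0" "near L j j' = 0"
      by (auto simp: near_def)
    with nonneg hit_corr_le_separated_both[OF 1] show ?thesis
      by (simp; linarith)
  next
    case 2
    then have "near L i i' = 0" "near L j j' = 1"
      by (auto simp: near_def)
    with nonneg hit_corr_le_separated_first[OF 2(1), of j j'] show ?thesis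
      by (simp; linarith)
  next
    case 3
    then have "near L i i' = 1" "near L j j' = 0"
      by (auto simp: near_def)
    with nonneg hit_corr_le_separated_second[OF 3(2), of i i'] show ?thesis
      by (simp; linarith)
  next
    case 4
    then have "near L i i' = 1" "near L j j' = 1"
      by (auto simp: near_def)
    with nonneg hit_corr_le_m12[of i j i' j'] show ?thesis
      by (simp; linarith)
  qed
qed

lemma hits_eq: "hits T S r n = (\<lambda>z. \<Sum>i<n. \<Sum>j<n. hit T S r i j z)"
  by (simp add: fun_eq_iff hits_def)

lemma hits_square_eq:
  "(hits T S r n z)\<^sup>2 = (\<Sum>i<n. \<Sum>i'<n. \<Sum>j<n. \<Sum>j'<n. hit T S r i j z * hit T S r i' j' z)"
  unfolding hits_def power2_eq_square sum_product by simp

lemma borel_measurable_hits [measurable]: "hits T S r n \<in> borel_measurable (M \<Otimes>\<^sub>M N)"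
  unfolding hits_eq by measurable

lemma integrable_hits: "integrable (M \<Otimes>\<^sub>M N) (hits T S r n)"
  unfolding hits_eq by (auto intro!: integrable_sum integrable_hit)

lemma integrable_hits_square: "integrable (M \<Otimes>\<^sub>M N) (\<lambda>z. (hits T S r n z)\<^sup>2)"
  unfolding hits_square_eq by (simp add: integrable_sum integrable_hit_mult)

lemma integral_hits: "(\<integral>z. hits T S r n z \<partial>(M \<Otimes>\<^sub>M N)) = (real n)\<^sup>2 * m12"
  unfolding hits_eq by (simp add: integral_sum integrable_hit integral_hit power2_eq_square)

lemma integral_hits_square_le:
  fixes n L :: nat
  defines "A \<equiv> 2 * sqrt (\<integral>y. S2.ball_prob r y \<partial>N) * m12"
    and "B \<equiv> 2 * sqrt (\<integral>y. S1.ball_prob r y \<partial>M) * m12"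
    and "e \<equiv> C * exp (- \<theta> * real L)"
  shows "(\<integral>z. (hits T S r n z)\<^sup>2 \<partial>(M \<Otimes>\<^sub>M N))
    \<le> real n ^ 4 * (m12\<^sup>2 + 2 * e) + real n ^ 3 * (2 * real L) * (A + B) + (real n * (2 * real L))\<^sup>2 * m12"
proof -
  define K where "K = (\<Sum>i<n. \<Sum>i'<n. near L i i')"
  have K: "0 \<le> K" "K \<le> real n * (2 * real L)"
    unfolding K_def using sum_near_le by (auto intro!: sum_nonneg simp: near_def)
  have nonneg: "0 \<le> m12" "0 \<le> A" "0 \<le> B"
    unfolding A_def B_def using m12_nonneg by auto
  have "(\<integral>z. (hits T S r n z)\<^sup>2 \<partial>(M \<Otimes>\<^sub>M N))
      = (\<Sum>i<n. \<Sum>i'<n. \<Sum>j<n. \<Sum>j'<n. hit_corr i j i' j')"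
    unfolding hits_square_eq by (simp add: integral_sum integrable_sum integrable_hit_mult)
  also have "\<dots> \<le> (\<Sum>i<n. \<Sum>i'<n. \<Sum>j<n. \<Sum>j'<n.
      (m12\<^sup>2 + 2 * e) + near L i i' * A + near L j j' * B + near L i i' * near L j j' * m12)"
    unfolding A_def B_def e_def by (intro sum_mono hit_corr_le)
  also have "\<dots> = real n ^ 4 * (m12\<^sup>2 + 2 * e) + (real n)\<^sup>2 * K * (A + B) + K * K * m12"
    by (simp add: sum.distrib sum_distrib_left[symmetric] sum_distrib_right[symmetric] K_def
        power4_eq_xxxx power2_eq_square algebra_simps)
  also have "\<dots> \<le> real n ^ 4 * (m12\<^sup>2 + 2 * e) + (real n)\<^sup>2 * (real n * (2 * real L)) * (A + B)
      + (real n * (2 * real L)) * (real n * (2 * real L)) * m12"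
    using K nonneg by (intro add_mono mult_right_mono mult_left_mono mult_mono) auto
  finally show ?thesis
    by (simp add: power2_eq_square power3_eq_cube algebra_simps)
qed

lemma E_set_eq: "E_set X T S n r = {z \<in> space (M \<Otimes>\<^sub>M N). 0 < hits T S r n z}"
  unfolding E_set_def space_pair_measure S1.space_eq S2.space_eq by (force simp: hits_pos_iff)

lemma E_set_sets [measurable]: "E_set X T S n r \<in> sets (M \<Otimes>\<^sub>M N)"
  unfolding E_set_eq by measurable

lemma one_minus_prob_E_set_le:
  assumes "0 < n" and "0 < m12"
  shows "1 - P.prob (E_set X T S n r)
    \<le> 2 * (C * exp (- \<theta> * real L)) / m12\<^sup>2
      + 4 * real L * (sqrt (\<integral>y. S1.ball_prob r y \<partial>M) + sqrt (\<integral>y. S2.ball_prob r y \<partial>N)) / (real n * m12)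
      + 4 * (real L)\<^sup>2 / ((real n)\<^sup>2 * m12)"
proof -
  let ?Z = "hits T S r n"
  define \<mu> where "\<mu> = (real n)\<^sup>2 * m12"
  have \<mu>: "0 < \<mu>" "P.expectation ?Z = \<mu>"
    using assms by (simp_all add: \<mu>_def integral_hits)
  have "space (M \<Otimes>\<^sub>M N) - E_set X T S n r \<subseteq> {z \<in> space (M \<Otimes>\<^sub>M N). \<mu> \<le> \<bar>?Z z - P.expectation ?Z\<bar>}"
    using \<mu> hits_nonneg[of T S r n] unfolding E_set_eq by force
  then have "1 - P.prob (E_set X T S n r) \<le> P.prob {z \<in> space (M \<Otimes>\<^sub>M N). \<mu> \<le> \<bar>?Z z - P.expectation ?Z\<bar>}"
    by (simp add: P.prob_compl[symmetric] P.finite_measure_mono)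
  also have "\<dots> \<le> P.variance ?Z / \<mu>\<^sup>2"
    using \<mu> integrable_hits_square by (intro P.Chebyshev_inequality) auto
  also have "\<dots> = ((\<integral>z. (?Z z)\<^sup>2 \<partial>(M \<Otimes>\<^sub>M N)) - (P.expectation ?Z)\<^sup>2) / \<mu>\<^sup>2"
    by (simp only: P.variance_eq[OF integrable_hits integrable_hits_square])
  also have "\<dots> \<le> (real n ^ 4 * (m12\<^sup>2 + 2 * (C * exp (- \<theta> * real L)))
      + real n ^ 3 * (2 * real L) * (2 * sqrt (\<integral>y. S2.ball_prob r y \<partial>N) * m12
        + 2 * sqrt (\<integral>y. S1.ball_prob r y \<partial>M) * m12)
      + (real n * (2 * real L))\<^sup>2 * m12 - \<mu>\<^sup>2) / \<mu>\<^sup>2"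
    using integral_hits_square_le[of n L] unfolding \<mu>(2)
    by (intro divide_right_mono diff_right_mono) auto
  also have "\<dots> = 2 * (C * exp (- \<theta> * real L)) / m12\<^sup>2
      + 4 * real L * (sqrt (\<integral>y. S1.ball_prob r y \<partial>M) + sqrt (\<integral>y. S2.ball_prob r y \<partial>N)) / (real n * m12)
      + 4 * (real L)\<^sup>2 / ((real n)\<^sup>2 * m12)"
    using assms unfolding \<mu>_def by (simp add: field_simps power2_eq_square power3_eq_cube power4_eq_xxxx)
  finally show ?thesis .
qed

lemma prob_E_set_ge:
  assumes "3 \<le> n" and "1 \<le> H"
    and m12: "(ln (real n))\<^sup>2 * H / (real n)\<^sup>2 \<le> m12"
    and "sqrt (\<integral>y. S1.ball_prob r y \<partial>M) / m12 \<le> real n / (ln (real n) * H)"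
    and "sqrt (\<integral>y. S2.ball_prob r y \<partial>N) / m12 \<le> real n / (ln (real n) * H)"
  shows "1 - (2 * C + 8 * (4 / \<theta> + 1) + 4 * (4 / \<theta> + 1)\<^sup>2) / H \<le> P.prob (E_set X T S n r)"
proof -
  define l where "l = ln (real n)"
  define L where "L = nat \<lceil>4 * l / \<theta>\<rceil>"
  have "exp 1 \<le> real n"
    using \<open>3 \<le> n\<close> exp_le by linarith
  then have "1 \<le> l"
    unfolding l_def using \<open>3 \<le> n\<close> by (subst ln_ge_iff) auto
  have "0 < l\<^sup>2 * H / (real n)\<^sup>2"
    using \<open>1 \<le> l\<close> \<open>1 \<le> H\<close> \<open>3 \<le> n\<close> by simp
  then have "0 < m12"
    using m12 unfolding l_def by linarith
  have "4 * l / \<theta> \<le> real L"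
    unfolding L_def by linarith
  have "real L \<le> (4 / \<theta> + 1) * l"
  proof -
    have "real L \<le> 4 * l / \<theta> + 1"
      unfolding L_def using \<open>1 \<le> l\<close> theta_pos by (simp add: of_nat_ceiling)
    then show ?thesis
      using \<open>1 \<le> l\<close> by (simp add: field_simps)
  qed
  have exp_L: "C * exp (- \<theta> * real L) \<le> C / (real n) ^ 4"
  proof -
    have "exp (- \<theta> * real L) \<le> exp (- (4 * l))"
      using \<open>4 * l / \<theta> \<le> real L\<close> theta_pos by (simp add: field_simps)
    also have "exp (- (4 * l)) = 1 / (real n) ^ 4"
    proof -
      have "exp (4 * l) = exp (ln ((real n) ^ 4))"
        unfolding l_def using \<open>3 \<le> n\<close> by (simp add: ln_realpow)
      then show ?thesis
        using \<open>3 \<le> n\<close> by (simp add: exp_minus inverse_eq_divide)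
    qed
    finally show ?thesis
      using C_nonneg by (simp add: mult_left_mono divide_inverse)
  qed
  have "1 - P.prob (E_set X T S n r)
      \<le> 2 * (C * exp (- \<theta> * real L)) / m12\<^sup>2
        + 4 * real L * (sqrt (\<integral>y. S1.ball_prob r y \<partial>M) + sqrt (\<integral>y. S2.ball_prob r y \<partial>N)) / (real n * m12)
        + 4 * (real L)\<^sup>2 / ((real n)\<^sup>2 * m12)"
    using \<open>3 \<le> n\<close> \<open>0 < m12\<close> by (intro one_minus_prob_E_set_le) auto
  also have "\<dots> \<le> (2 * C + 8 * (4 / \<theta> + 1) + 4 * (4 / \<theta> + 1)\<^sup>2) / H"
    by (rule error_terms_le[OF \<open>1 \<le> l\<close> \<open>1 \<le> H\<close> _ m12[folded l_def] assms(4,5)[folded l_def] _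
          \<open>real L \<le> (4 / \<theta> + 1) * l\<close>])
      (use \<open>3 \<le> n\<close> C_nonneg exp_L in \<open>auto intro: integral_nonneg_AE\<close>)
  finally show ?thesis
    by linarith
qed

end

lemma (in prob_space) prob_limsup_eq_1:
  assumes sets: "\<And>n. A n \<in> events" and lim: "(\<lambda>n. prob (A n)) \<longlonglongrightarrow> 1"
  shows "prob (\<Inter>N. \<Union>n\<in>{N..}. A n) = 1"
proof -
  have "prob (\<Union>n\<in>{N..}. A n) = 1" for N
  proof (rule antisym)
    have "prob (A n) \<le> prob (\<Union>n\<in>{N..}. A n)" if "N \<le> n" for n
      using that sets by (intro finite_measure_mono) auto
    then show "1 \<le> prob (\<Union>n\<in>{N..}. A n)"
      using lim by (intro LIMSEQ_le_const2) auto
  qed simp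
  then have "AE x in M. \<forall>N. x \<in> (\<Union>n\<in>{N..}. A n)"
    using sets by (subst AE_all_countable) (auto simp: prob_eq_1)
  then show ?thesis
    using sets by (subst prob_eq_1) auto
qed

theorem mainTheorem4:
  fixes X :: "real set" and M1 M2 :: "real measure" and T1 T2 :: "real \<Rightarrow> real"
    and r :: "nat \<Rightarrow> real" and h :: "nat \<Rightarrow> real"
  assumes sp1: "space M1 = X" and sets1: "sets M1 = sets (restrict_space borel X)"
    and sp2: "space M2 = X" and sets2: "sets M2 = sets (restrict_space borel X)"
    and P1: "prob_space M1" and P2: "prob_space M2"
    and T1m: "T1 \<in> measurable M1 M1" and T1p: "distr M1 M1 T1 = M1"
    and T2m: "T2 \<in> measurable M2 M2" and T2p: "distr M2 M2 T2 = M2"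
    and mix1: "exp_mixing_BV_Linf M1 T1" and mix2: "exp_mixing_BV_Linf M2 T2"
    and rpos: "\<And>n. r n > 0"
    and hpos: "\<And>n. h n > 0" and hlim: "filterlim h at_top sequentially"
    and lower: "\<forall>\<^sub>F n in sequentially.
        (\<integral>y. measure M1 (ball y (r n) \<inter> X) \<partial>M2) \<ge> (ln (real n))\<^sup>2 * h n / (real n)\<^sup>2"
    and ratio1: "\<forall>\<^sub>F n in sequentially.
        sqrt (\<integral>y. measure M1 (ball y (r n) \<inter> X) \<partial>M1) / (\<integral>y. measure M1 (ball y (r n) \<inter> X) \<partial>M2)
          \<le> real n / (ln (real n) * h n)"
    and ratio2: "\<forall>\<^sub>F n in sequentially.
        sqrt (\<integral>y. measure M2 (ball y (r n) \<inter> X) \<partial>M2) / (\<integral>y. measure M1 (ball y (r n) \<inter> X) \<partial>M2)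
          \<le> real n / (ln (real n) * h n)"
  shows "measure (M1 \<Otimes>\<^sub>M M2) (\<Inter>N. \<Union>n\<in>{N..}. E_set X T1 T2 n (r n)) = 1"
proof -
  interpret S1: real_mps M1 T1 X
    using P1 by (rule real_mps.intro) (unfold_locales; fact)
  interpret S2: real_mps M2 T2 X
    using P2 by (rule real_mps.intro) (unfold_locales; fact)
  obtain C1 \<theta>1 where "0 < \<theta>1" and decay1: "decay_BV_test M1 T1 X C1 \<theta>1"
    using S1.exp_mixing_imp_decay[OF mix1] .
  obtain C2 \<theta>2 where "0 < \<theta>2" and decay2: "decay_BV_test M2 T2 X C2 \<theta>2"
    using S2.exp_mixing_imp_decay[OF mix2] .
  have pair: "real_mps_pair M1 T1 M2 T2 X (max C1 C2) (min \<theta>1 \<theta>2) (r n)" for n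
    by (intro real_mps_pair.intro real_mps_pair_axioms.intro S1.real_mps_axioms S2.real_mps_axioms
        decay_BV_test_mono[OF decay1] decay_BV_test_mono[OF decay2] rpos)
      (use \<open>0 < \<theta>1\<close> \<open>0 < \<theta>2\<close> in auto)
  interpret P: pair_prob_space M1 M2
    by (simp add: pair_prob_space_def pair_sigma_finite_def prob_space_imp_sigma_finite P1 P2)
  define K where "K = 2 * max C1 C2 + 8 * (4 / min \<theta>1 \<theta>2 + 1) + 4 * (4 / min \<theta>1 \<theta>2 + 1)\<^sup>2"
  have lower_bound: "\<forall>\<^sub>F n in sequentially. 1 - K / h n \<le> P.prob (E_set X T1 T2 n (r n))"
    using filterlim_at_top[THEN iffD1, OF hlim, rule_format, of 1] eventually_ge_at_top[of 3] lower ratio1 ratio2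
    unfolding K_def by eventually_elim (rule real_mps_pair.prob_E_set_ge[OF pair])
  have "(\<lambda>n. 1 - K / h n) \<longlonglongrightarrow> 1"
    using tendsto_diff[OF tendsto_const tendsto_divide_0[OF tendsto_const filterlim_at_top_imp_at_infinity[OF hlim]]]
    by simp
  from tendsto_sandwich[OF lower_bound _ this tendsto_const]
  have "(\<lambda>n. P.prob (E_set X T1 T2 n (r n))) \<longlonglongrightarrow> 1"
    by simp
  then show ?thesis
    by (rule P.prob_limsup_eq_1[OF real_mps_pair.E_set_sets[OF pair]])
qed

end
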